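(* Let $n > 2k+1$. Every deterministic algorithm that, on every valid instance with $n$ elements and $k$ corrupted elements, outputs a set of exactly $2k+1$ elements containing the uncorrupted maximum, must make at least $(n-(2k+1))(k+1) = nk + (n - 2k^2 - 3k - 1)$ comparison queries on some instance.
   Context: Model: there are $n$ elements $x_1,\dots,x_n$, exactly $k$ of which are corrupted (unknown to the algorithm). For every pair of distinct elements the comparison graph (a tournament) specifies which one is larger. The comparison graph restricted to the $n-k$ uncorrupted elements is acyclic; comparisons involving corrupted elements may be oriented arbitrarily. The uncorrupted maximum is the uncorrupted element larger than every other uncorrupted element. An instance is a comparison graph together with a valid set of $k$ corrupted elements. An algorithm knows $n$ and $k$, may query the orientation of any pair (a comparison query, answered according to the comparison graph), and outputs a set of elements. *)

theory Defs
  imports Main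
begin

text \<open>Elements are 0,...,n-1.  A comparison graph is a relation T where
  T i j means "i is larger than j".  It is a tournament on {0..<n}
  (and empty outside it, so that ill-formed queries carry no information).\<close>

definition tournament :: "nat \<Rightarrow> (nat \<Rightarrow> nat \<Rightarrow> bool) \<Rightarrow> bool" where
  "tournament n T \<longleftrightarrow>
     (\<forall>i j. T i j \<longrightarrow> i < n \<and> j < n \<and> i \<noteq> j) \<and>
     (\<forall>i j. T i j \<longrightarrow> \<not> T j i) \<and>
     (\<forall>i j. i < n \<longrightarrow> j < n \<longrightarrow> i \<noteq> j \<longrightarrow> T i j \<or> T j i)"

definition valid_instance ::
  "nat \<Rightarrow> nat \<Rightarrow> (nat \<Rightarrow> nat \<Rightarrow> bool) \<Rightarrow> nat set \<Rightarrow> bool" where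
  "valid_instance n k T C \<longleftrightarrow>
     tournament n T \<and> C \<subseteq> {..<n} \<and> card C = k \<and>
     acyclic {(i, j). T i j \<and> i \<notin> C \<and> j \<notin> C}"

definition uncorrupted_max ::
  "nat \<Rightarrow> (nat \<Rightarrow> nat \<Rightarrow> bool) \<Rightarrow> nat set \<Rightarrow> nat \<Rightarrow> bool" where
  "uncorrupted_max n T C u \<longleftrightarrow>
     u < n \<and> u \<notin> C \<and> (\<forall>v. v < n \<longrightarrow> v \<notin> C \<longrightarrow> v \<noteq> u \<longrightarrow> T u v)"

text \<open>Deterministic (adaptive) comparison algorithms as decision trees:
  Query i j t f asks whether i is larger than j and continues with t or f.\<close>

datatype alg = Output "nat set" | Query nat nat alg alg

fun run :: "alg \<Rightarrow> (nat \<Rightarrow> nat \<Rightarrow> bool) \<Rightarrow> nat set" where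
  "run (Output S) T = S"
| "run (Query i j t f) T = (if T i j then run t T else run f T)"

fun queries :: "alg \<Rightarrow> (nat \<Rightarrow> nat \<Rightarrow> bool) \<Rightarrow> nat" where
  "queries (Output S) T = 0"
| "queries (Query i j t f) T = Suc (if T i j then queries t T else queries f T)"

end

theory Submission
  imports Defs
begin

text \<open>Adversary argument. Answer every query according to the natural order on
  \<open>{0..<n}\<close> with the \<open>k\<close> smallest elements corrupted. Suppose an element \<open>x\<close> outside
  the output was seen to lose at most \<open>k\<close> comparisons. Corrupt exactly the
  elements it lost to (padded to \<open>k\<close>) and let \<open>x\<close> beat every other element: all
  observed answers stay the same, so the algorithm outputs the same set, yet \<open>x\<close>
  is now the uncorrupted maximum. Hence each of the \<open>n - (2k+1)\<close> elements outside
  the output lost at least \<open>k + 1\<close> observed comparisons, and every query reveals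
  at most one loss.\<close>

fun observed_wins :: "alg \<Rightarrow> (nat \<Rightarrow> nat \<Rightarrow> bool) \<Rightarrow> (nat \<times> nat) set" where
  "observed_wins (Output S) T = {}"
| "observed_wins (Query i j t f) T =
     (if T i j then insert (i, j) (observed_wins t T)
      else if T j i then insert (j, i) (observed_wins f T)
      else observed_wins f T)"

lemma finite_observed_wins: "finite (observed_wins A T)"
  by (induction A) auto

lemma card_observed_wins_le_queries: "card (observed_wins A T) \<le> queries A T"
  by (induction A) (auto simp: card_insert_if finite_observed_wins)

lemma observed_wins_hold: "(i, j) \<in> observed_wins A T \<Longrightarrow> T i j"
  by (induction A) (auto split: if_splits)

lemma run_eq_if_observed_wins_hold:
  assumes "tournament n T" "tournament n T'"
    and "\<forall>(i, j) \<in> observed_wins A T. T' i j"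
  shows "run A T' = run A T"
  using assms(3)
proof (induction A)
  case (Output S)
  then show ?case by simp
next
  case (Query i j t f)
  show ?case
  proof (cases "T i j")
    case True
    then show ?thesis using Query by auto
  next
    case False
    have "\<not> T' i j"
    proof
      assume "T' i j"
      with assms False have "T j i"
        unfolding tournament_def by metis
      with Query.prems False have "T' j i" by auto
      with \<open>T' i j\<close> assms(2) show False unfolding tournament_def by blast
    qed
    moreover have "\<forall>(i, j) \<in> observed_wins f T. T' i j"
      using Query.prems False by (auto split: if_splits)
    ultimately show ?thesis using Query False by auto
  qed
qed

lemma sum_card_predecessors_le_card:
  assumes "finite W"
  shows "(\<Sum>x\<in>D. card {y. (y, x) \<in> W}) \<le> card W"
proof (cases "finite D")
  case True
  have finite_predecessors: "finite {y. (y, x) \<in> W}" for x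
  proof -
    have "{y. (y, x) \<in> W} \<subseteq> fst ` W" by force
    then show ?thesis using assms finite_subset by blast
  qed
  have "(\<Sum>x\<in>D. card {y. (y, x) \<in> W}) = card (SIGMA x:D. {y. (y, x) \<in> W})"
    using True finite_predecessors by simp
  also have "\<dots> = card ((\<lambda>(x, y). (y, x)) ` (SIGMA x:D. {y. (y, x) \<in> W}))"
    by (rule card_image[symmetric]) (auto simp: inj_on_def)
  also have "\<dots> \<le> card W"
    by (rule card_mono[OF assms]) auto
  finally show ?thesis .
qed simp

lemma acyclic_if_rank_decreasing:
  fixes rank :: "'a \<Rightarrow> nat"
  assumes "R \<subseteq> {(i, j). rank j < rank i}"
  shows "acyclic R"
proof -
  have "acyclic (inv_image {(a, b). a < b} rank)"
    by (intro wf_acyclic wf_inv_image) (simp add: wf_less)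
  moreover have "R\<inverse> \<subseteq> inv_image {(a, b). a < b} rank"
    using assms by auto
  ultimately show ?thesis
    using acyclic_subset acyclic_converse by blast
qed

definition natural_order :: "nat \<Rightarrow> nat \<Rightarrow> nat \<Rightarrow> bool" where
  "natural_order n i j \<longleftrightarrow> i < n \<and> j < n \<and> j < i"

lemma tournament_natural_order: "tournament n (natural_order n)"
  unfolding tournament_def natural_order_def by auto

lemma valid_instance_natural_order:
  assumes "k \<le> n"
  shows "valid_instance n k (natural_order n) {..<k}"
  unfolding valid_instance_def using assms tournament_natural_order
  by (auto intro!: acyclic_if_rank_decreasing[where rank = id] simp: natural_order_def)

definition lift_to_top :: "nat \<Rightarrow> nat set \<Rightarrow> nat \<Rightarrow> nat \<Rightarrow> nat \<Rightarrow> bool" where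
  "lift_to_top n C x i j \<longleftrightarrow>
     (if i = x \<and> j \<notin> C then j < n \<and> j \<noteq> x
      else if j = x \<and> i \<notin> C then False
      else natural_order n i j)"

lemma tournament_lift_to_top:
  "x < n \<Longrightarrow> tournament n (lift_to_top n C x)"
  unfolding tournament_def lift_to_top_def natural_order_def by auto

lemma valid_instance_lift_to_top:
  assumes "x < n" "C \<subseteq> {..<n} - {x}" "card C = k"
  shows "valid_instance n k (lift_to_top n C x) C"
  unfolding valid_instance_def
  using assms tournament_lift_to_top[OF \<open>x < n\<close>]
  by (auto intro!: acyclic_if_rank_decreasing[where rank = "\<lambda>i. if i = x then n else i"]
      simp: lift_to_top_def natural_order_def split: if_splits)

lemma uncorrupted_max_lift_to_top:
  "x < n \<Longrightarrow> x \<notin> C \<Longrightarrow> uncorrupted_max n (lift_to_top n C x) C x"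
  unfolding uncorrupted_max_def lift_to_top_def by auto

definition always_outputs_max :: "nat \<Rightarrow> nat \<Rightarrow> alg \<Rightarrow> bool" where
  "always_outputs_max n k A \<longleftrightarrow>
     (\<forall>T C. valid_instance n k T C \<longrightarrow>
        (\<forall>u. uncorrupted_max n T C u \<longrightarrow> u \<in> run A T))"

lemma excluded_element_has_many_observed_losses:
  assumes "always_outputs_max n k A" "k < n"
    and "x < n" "x \<notin> run A (natural_order n)"
  shows "k + 1 \<le> card {y. (y, x) \<in> observed_wins A (natural_order n)}"
    (is "_ \<le> card ?L")
proof (rule ccontr)
  assume "\<not> k + 1 \<le> card ?L"
  moreover have "?L \<subseteq> {..<n} - {x}"
  proof
    fix y
    assume "y \<in> ?L"
    then have "natural_order n y x"
      using observed_wins_hold by simp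
    then show "y \<in> {..<n} - {x}"
      by (simp add: natural_order_def)
  qed
  moreover have "k \<le> card ({..<n} - {x})"
    using assms by simp
  ultimately obtain C where C: "?L \<subseteq> C" "C \<subseteq> {..<n} - {x}" "card C = k"
    using exists_subset_between[of ?L k "{..<n} - {x}"] by auto
  have "\<forall>(i, j) \<in> observed_wins A (natural_order n). lift_to_top n C x i j"
  proof clarify
    fix i j
    assume observed: "(i, j) \<in> observed_wins A (natural_order n)"
    then have "natural_order n i j"
      by (rule observed_wins_hold)
    moreover have "j = x \<longrightarrow> i \<in> C"
      using observed C(1) by auto
    ultimately show "lift_to_top n C x i j"
      by (auto simp: lift_to_top_def natural_order_def)
  qed
  then have "run A (lift_to_top n C x) = run A (natural_order n)"
    by (rule run_eq_if_observed_wins_hold[OF tournament_natural_order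
          tournament_lift_to_top[OF \<open>x < n\<close>]])
  moreover have "x \<in> run A (lift_to_top n C x)"
    using assms(1) valid_instance_lift_to_top[OF \<open>x < n\<close> C(2,3)]
      uncorrupted_max_lift_to_top[OF \<open>x < n\<close>] C(2)
    unfolding always_outputs_max_def by blast
  ultimately show False
    using assms(4) by simp
qed

theorem mainTheorem3:
  fixes n k :: nat and A :: alg
  assumes "n > 2 * k + 1"
    and "\<forall>T C. valid_instance n k T C \<longrightarrow>
           run A T \<subseteq> {..<n} \<and> card (run A T) = 2 * k + 1 \<and>
           (\<forall>u. uncorrupted_max n T C u \<longrightarrow> u \<in> run A T)"
  shows "\<exists>T C. valid_instance n k T C \<and> queries A T \<ge> (n - (2 * k + 1)) * (k + 1)"
proof -
  let ?T = "natural_order n"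
  have valid: "valid_instance n k ?T {..<k}"
    using assms(1) by (intro valid_instance_natural_order) simp
  then have output_bounds: "run A ?T \<subseteq> {..<n}" "card (run A ?T) = 2 * k + 1"
    using assms(2) by auto
  have correct: "always_outputs_max n k A"
    using assms(2) unfolding always_outputs_max_def by blast
  define D where "D = {..<n} - run A ?T"
  have "card D = n - (2 * k + 1)"
    unfolding D_def using output_bounds by (simp add: card_Diff_subset finite_subset)
  moreover have "\<forall>x\<in>D. k + 1 \<le> card {y. (y, x) \<in> observed_wins A ?T}"
    using excluded_element_has_many_observed_losses[OF correct] assms(1) unfolding D_def by auto
  ultimately have "(n - (2 * k + 1)) * (k + 1) \<le> (\<Sum>x\<in>D. card {y. (y, x) \<in> observed_wins A ?T})"
    using sum_bounded_below[of D "k + 1"] by simp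
  also have "\<dots> \<le> queries A ?T"
    using sum_card_predecessors_le_card[OF finite_observed_wins] card_observed_wins_le_queries
    by (rule le_trans)
  finally show ?thesis
    using valid by blast
qed

end
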